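(* Let $\mathcal{A}$ be a finite alphabet, $\mathbf{p}$ an irreducible pair on $\mathcal{A}$ and $\mathbf{q}$ any pair in the labeled extended Rauzy class of $\mathbf{p}$. Then $\mathcal{P}(\mathbf{q})=\mathcal{P}(\mathbf{p})$.
   Context: Let $n=\#\mathcal{A}$. A pair is $\mathbf{p}=(p_0,p_1)$ with $p_0,p_1:\mathcal{A}\to\{1,\dots,n\}$ bijections. Irreducible: $p_0^{-1}\{1,\dots,k\}\ne p_1^{-1}\{1,\dots,k\}$ for $1\le k<n$. Rauzy move of type $\varepsilon$: $\varepsilon\mathbf{p}=(p'_0,p'_1)$, $p'_\varepsilon=p_\varepsilon$, and for $z=p_\varepsilon^{-1}(n)$, $p'_{1-\varepsilon}(b)=p_{1-\varepsilon}(b)$ if $p_{1-\varepsilon}(b)\le p_{1-\varepsilon}(z)$, $=p_{1-\varepsilon}(b)+1$ if $p_{1-\varepsilon}(z)<p_{1-\varepsilon}(b)<n$, $=p_{1-\varepsilon}(z)+1$ if $p_{1-\varepsilon}(b)=n$. Left Rauzy move of type $\varepsilon$: $\tilde\varepsilon\mathbf{p}=(p'_0,p'_1)$, $p'_\varepsilon=p_\varepsilon$, and for $a=p_\varepsilon^{-1}(1)$, $p'_{1-\varepsilon}(b)=p_{1-\varepsilon}(a)-1$ if $p_{1-\varepsilon}(b)=1$, $=p_{1-\varepsilon}(b)-1$ if $1<p_{1-\varepsilon}(b)<p_{1-\varepsilon}(a)$, unchanged otherwise. The labeled extended Rauzy class of $\mathbf{p}$ is the set of pairs reachable from $\mathbf{p}$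 by Rauzy and left Rauzy moves of both types. $\mathcal{S}(\mathbf{p}):\mathcal{A}\to\mathcal{A}$: $\mathcal{S}(\mathbf{p})(\alpha)=p_0^{-1}(1)$ if $p_1(\alpha)=1$; $=p_0^{-1}(p_0(p_1^{-1}(n))+1)$ if $p_1(\alpha)=p_1(p_0^{-1}(n))+1$; $=p_0^{-1}(p_0(p_1^{-1}(p_1(\alpha)-1))+1)$ otherwise. $\mathcal{Y}(\mathbf{p})$ is the first return map of $\mathcal{S}(\mathbf{p})$ to $\mathcal{A}\setminus\{p_0^{-1}(1)\}$ (i.e. $\mathcal{Y}(\mathbf{p})(b)=\mathcal{S}(\mathbf{p})^2(b)$ if $p_1(b)=1$ and $\mathcal{S}(\mathbf{p})(b)$ otherwise), and $\mathcal{P}(\mathbf{p})$ is the unordered list, with multiplicity, of the cycle lengths of $\mathcal{Y}(\mathbf{p})$. *)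

theory Defs
  imports Main "HOL-Library.Multiset" "HOL-Library.Cardinality"
begin

text \<open>The alphabet is a finite type 'a; n = CARD('a). A pair is a pair of maps
  'a => nat; component 0 is fst, component 1 is snd.\<close>

type_synonym 'a rpair = "('a \<Rightarrow> nat) \<times> ('a \<Rightarrow> nat)"

definition is_pair :: "('a::finite) rpair \<Rightarrow> bool" where
  "is_pair p \<longleftrightarrow> bij_betw (fst p) UNIV {1 .. CARD('a)} \<and> bij_betw (snd p) UNIV {1 .. CARD('a)}"

definition irreducible :: "('a::finite) rpair \<Rightarrow> bool" where
  "irreducible p \<longleftrightarrow>
     (\<forall>k. 1 \<le> k \<and> k < CARD('a) \<longrightarrow> fst p -` {1..k} \<noteq> snd p -` {1..k})"

definition comp :: "'a rpair \<Rightarrow> nat \<Rightarrow> ('a \<Rightarrow> nat)" where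
  "comp p e = (if e = 0 then fst p else snd p)"

definition mk_pair :: "nat \<Rightarrow> ('a \<Rightarrow> nat) \<Rightarrow> ('a \<Rightarrow> nat) \<Rightarrow> 'a rpair" where
  "mk_pair e pe po = (if e = 0 then (pe, po) else (po, pe))"

definition rauzy_move :: "nat \<Rightarrow> ('a::finite) rpair \<Rightarrow> 'a rpair" where
  "rauzy_move e p =
    (let n = CARD('a); pe = comp p e; po = comp p (1 - e); z = inv pe n;
         po' = (\<lambda>b. if po b \<le> po z then po b
                    else if po b < n then po b + 1
                    else po z + 1)
     in mk_pair e pe po')"

definition left_rauzy_move :: "nat \<Rightarrow> ('a::finite) rpair \<Rightarrow> 'a rpair" where
  "left_rauzy_move e p =
    (let pe = comp p e; po = comp p (1 - e); a = inv pe 1;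
         po' = (\<lambda>b. if po b = 1 then po a - 1
                    else if 1 < po b \<and> po b < po a then po b - 1
                    else po b)
     in mk_pair e pe po')"

definition rauzy_step :: "('a::finite) rpair \<Rightarrow> 'a rpair \<Rightarrow> bool" where
  "rauzy_step p q \<longleftrightarrow> (\<exists>e\<in>{0,1}. q = rauzy_move e p \<or> q = left_rauzy_move e p)"

definition labeled_extended_rauzy_class :: "('a::finite) rpair \<Rightarrow> 'a rpair set" where
  "labeled_extended_rauzy_class p = {q. rauzy_step\<^sup>*\<^sup>* p q}"

definition S_map :: "('a::finite) rpair \<Rightarrow> 'a \<Rightarrow> 'a" where
  "S_map p \<alpha> =
    (let n = CARD('a); p0 = fst p; p1 = snd p in
     if p1 \<alpha> = 1 then inv p0 1
     else if p1 \<alpha> = p1 (inv p0 n) + 1 then inv p0 (p0 (inv p1 n) + 1)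
     else inv p0 (p0 (inv p1 (p1 \<alpha> - 1)) + 1))"

definition Y_map :: "('a::finite) rpair \<Rightarrow> 'a \<Rightarrow> 'a" where
  "Y_map p b = (if snd p b = 1 then S_map p (S_map p b) else S_map p b)"

definition orbit_of :: "('a \<Rightarrow> 'a) \<Rightarrow> 'a \<Rightarrow> 'a set" where
  "orbit_of f x = range (\<lambda>k. (f ^^ k) x)"

definition P_inv :: "('a::finite) rpair \<Rightarrow> nat multiset" where
  "P_inv p = image_mset card
     (mset_set (orbit_of (Y_map p) ` (UNIV - {inv (fst p) 1})))"

end

theory Submission
  imports Defs
begin

text \<open>Write \<open>S = S(p)\<close>. Then \<open>Y(p)\<close> is the first return map of the permutation \<open>S\<close> to
  the letters other than \<open>inv p0 1\<close>, and the letter that \<open>S\<close> sends to \<open>inv p0 1\<close> is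
  \<open>inv p1 1\<close>. As long as the two rows begin with different letters and end with different
  letters (irreducibility guarantees this when there are at least two letters, and every move
  preserves it), a Rauzy move of type 0 rotates a block of bottom positions in a way that leaves
  \<open>S\<close> unchanged, and a left Rauzy move of type 0 changes \<open>S\<close> only in a way that the first
  return map does not see. Exchanging the two rows replaces \<open>S\<close> by its inverse, and this inverse
  conjugates the inverse of \<open>Y(p)\<close> to \<open>Y\<close> of the exchanged pair, so the cycle type survives;
  moves of type 1 are moves of type 0 conjugated by the exchange.\<close>

text \<open>Keeps the numeral \<open>1\<close> in terms such as \<open>inv p 1\<close>, so that facts stated with \<open>1\<close>
  remain usable as rewrite rules.\<close>
declare One_nat_def [simp del]

section \<open>Orbits\<close>

lemma funpow_closed:
  assumes "\<And>x. x \<in> X \<Longrightarrow> f x \<in> X" "x \<in> X"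
  shows "(f ^^ k) x \<in> X"
  using assms by (induction k) auto

lemma funpow_periodic_on:
  assumes "finite X" and f_X: "\<And>x. x \<in> X \<Longrightarrow> f x \<in> X" and "inj_on f X" and x: "x \<in> X"
  obtains m where "m > 0" "(f ^^ m) x = x"
proof -
  define f' where "f' y = (if y \<in> X then f y else y)" for y
  have "inj f'"
    using \<open>inj_on f X\<close> f_X by (auto simp: f'_def inj_on_def)
  have f'_iter: "(f' ^^ k) x = (f ^^ k) x" for k
    by (induction k) (simp_all add: f'_def funpow_closed[OF f_X x])
  have "{y. \<exists>k. y = (f' ^^ k) x} \<subseteq> X"
    using funpow_closed[OF f_X x] by (auto simp: f'_iter)
  then obtain m where "m > 0" "(f' ^^ m) x = x"
    using funpow_inj_finite[OF \<open>inj f'\<close>] finite_subset[OF _ \<open>finite X\<close>] by metis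
  then show thesis using that by (simp add: f'_iter)
qed

lemma orbit_of_left_inverse:
  assumes "finite X" and f_X: "\<And>x. x \<in> X \<Longrightarrow> f x \<in> X" and "inj_on f X"
    and g_f: "\<And>x. x \<in> X \<Longrightarrow> g (f x) = x" and x: "x \<in> X"
  shows "orbit_of g x = orbit_of f x"
proof -
  have undo: "(g ^^ k) ((f ^^ k) y) = y" if "y \<in> X" for k y
    using that
  proof (induction k arbitrary: y)
    case (Suc k)
    have "(g ^^ Suc k) ((f ^^ Suc k) y) = (g ^^ k) (g (f ((f ^^ k) y)))"
      by (simp add: funpow_swap1)
    then show ?case using Suc g_f funpow_closed[OF f_X] by simp
  qed simp
  obtain m where "m > 0" "(f ^^ m) x = x"
    using funpow_periodic_on[OF assms(1-3) x] .
  then have "(f ^^ (m * k)) x = x" for k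
    by (induction k) (simp_all add: funpow_add)
  moreover have "k + (m * k - k) = m * k" "m * k - k + k = m * k" for k
    using \<open>m > 0\<close> by simp_all
  ultimately have period: "(f ^^ k) ((f ^^ (m * k - k)) x) = x" "(f ^^ (m * k - k)) ((f ^^ k) x) = x"
    for k by (metis comp_apply funpow_add)+
  have "(g ^^ k) x = (f ^^ (m * k - k)) x" for k
    using undo[of "(f ^^ (m * k - k)) x" k] funpow_closed[OF f_X x] period(1)[of k] by simp
  moreover have "(f ^^ k) x = (g ^^ (m * k - k)) x" for k
    using undo[of "(f ^^ k) x" "m * k - k"] funpow_closed[OF f_X x] period(2)[of k] by simp
  ultimately show ?thesis
    unfolding orbit_of_def by (metis (no_types, lifting) rangeE rangeI subsetI subset_antisym)
qed

lemma orbit_of_conj: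
  assumes "\<And>y. g (h y) = h (k y)"
  shows "orbit_of g (h x) = h ` orbit_of k x"
proof -
  have "(g ^^ j) (h x) = h ((k ^^ j) x)" for j
    using assms by (induction j) simp_all
  then show ?thesis by (auto simp: orbit_of_def image_image)
qed

lemma orbit_of_cong:
  assumes f_X: "\<And>x. x \<in> X \<Longrightarrow> f x \<in> X" and "\<And>x. x \<in> X \<Longrightarrow> g x = f x" and x: "x \<in> X"
  shows "orbit_of g x = orbit_of f x"
proof -
  have "(g ^^ k) x = (f ^^ k) x" for k
    by (induction k) (simp_all add: assms(2) funpow_closed[OF f_X x])
  then show ?thesis by (simp add: orbit_of_def)
qed

lemma image_mset_card_image_image:
  assumes "inj h" "finite A"
  shows "image_mset card (mset_set (image h ` A)) = image_mset card (mset_set A)"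
proof -
  have "inj_on (image h) A"
    using \<open>inj h\<close> by (simp add: inj_on_def inj_image_eq_iff)
  then show ?thesis
    using assms by (simp add: image_mset_mset_set[symmetric] multiset.map_comp o_def
        card_image inj_on_subset)
qed

section \<open>Rankings of a finite alphabet\<close>

lemma
  fixes f :: "'a::finite \<Rightarrow> nat"
  assumes "bij_betw f UNIV {1..CARD('a)}"
  shows rank_ge_1: "1 \<le> f x"
    and rank_le_card: "f x \<le> CARD('a)"
    and inv_rank: "inv f (f x) = x"
    and rank_inv: "1 \<le> i \<Longrightarrow> i \<le> CARD('a) \<Longrightarrow> f (inv f i) = i"
proof -
  show "1 \<le> f x" "f x \<le> CARD('a)" using bij_betw_apply[OF assms UNIV_I, of x] by auto
  show "inv f (f x) = x" using assms by (simp add: bij_betw_def)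
  show "f (inv f i) = i" if "1 \<le> i" "i \<le> CARD('a)"
    using assms that by (metis atLeastAtMost_iff bij_betw_imp_surj_on f_inv_into_f)
qed

lemma rank_eq_iff:
  fixes f :: "'a::finite \<Rightarrow> nat"
  assumes "bij_betw f UNIV {1..CARD('a)}" "1 \<le> i" "i \<le> CARD('a)"
  shows "f x = i \<longleftrightarrow> x = inv f i"
  using assms by (metis inv_rank rank_inv)

lemma
  fixes f :: "'a::finite \<Rightarrow> nat"
  assumes "bij_betw f UNIV {1..CARD('a)}"
  shows rank_vimage_1: "f -` {1..1} = {inv f 1}"
    and rank_vimage_below_card: "f -` {1..CARD('a) - 1} = UNIV - {inv f CARD('a)}"
proof -
  note eq_iff = rank_eq_iff[OF assms] and bounds = rank_ge_1[OF assms] rank_le_card[OF assms]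
  have n: "1 \<le> CARD('a)" using bounds by (meson order_trans)
  show "f -` {1..1} = {inv f 1}"
    using eq_iff[of 1] n by auto
  have "f x \<le> CARD('a) - 1 \<longleftrightarrow> f x \<noteq> CARD('a)" for x
    using bounds[of x] by linarith
  then show "f -` {1..CARD('a) - 1} = UNIV - {inv f CARD('a)}"
    using eq_iff[of "CARD('a)"] n bounds by auto
qed

lemma
  fixes p :: "'a::finite \<Rightarrow> nat" and \<sigma> \<tau> :: "nat \<Rightarrow> nat"
  assumes p: "bij_betw p UNIV {1..CARD('a)}"
    and \<sigma>: "\<And>j. 1 \<le> j \<Longrightarrow> j \<le> CARD('a) \<Longrightarrow> 1 \<le> \<sigma> j \<and> \<sigma> j \<le> CARD('a) \<and> \<tau> (\<sigma> j) = j"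
    and \<tau>: "\<And>i. 1 \<le> i \<Longrightarrow> i \<le> CARD('a) \<Longrightarrow> 1 \<le> \<tau> i \<and> \<tau> i \<le> CARD('a) \<and> \<sigma> (\<tau> i) = i"
  shows bij_rank_relabel: "bij_betw (\<sigma> \<circ> p) UNIV {1..CARD('a)}"
    and inv_rank_relabel: "1 \<le> i \<Longrightarrow> i \<le> CARD('a) \<Longrightarrow> inv (\<sigma> \<circ> p) i = inv p (\<tau> i)"
proof -
  have "bij_betw \<sigma> {1..CARD('a)} {1..CARD('a)}"
    by (rule bij_betw_byWitness[where f' = \<tau>]) (use \<sigma> \<tau> in auto)
  then show bij: "bij_betw (\<sigma> \<circ> p) UNIV {1..CARD('a)}"
    using bij_betw_trans[OF p] by blast
  show "inv (\<sigma> \<circ> p) i = inv p (\<tau> i)" if "1 \<le> i" "i \<le> CARD('a)"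
    using inv_rank[OF bij, of "inv p (\<tau> i)"] rank_inv[OF p] \<tau>[OF that] by simp
qed

lemma S_map_Pair:
  fixes p0 p1 :: "'a::finite \<Rightarrow> nat"
  shows "S_map (p0, p1) a =
    (if p1 a = 1 then inv p0 1
     else if p1 a = p1 (inv p0 CARD('a)) + 1 then inv p0 (p0 (inv p1 CARD('a)) + 1)
     else inv p0 (p0 (inv p1 (p1 a - 1)) + 1))"
  by (simp add: S_map_def Let_def)

definition top_successor :: "('a::finite \<Rightarrow> nat) \<Rightarrow> ('a \<Rightarrow> nat) \<Rightarrow> 'a \<Rightarrow> 'a" where
  "top_successor p0 p1 x =
    (if x = inv p0 CARD('a) then inv p0 (p0 (inv p1 CARD('a)) + 1) else inv p0 (p0 x + 1))"

lemma P_inv_eqI: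
  fixes p q :: "('a::finite) rpair"
  assumes "fst q = fst p"
    and Y_X: "\<And>b. b \<noteq> inv (fst p) 1 \<Longrightarrow> Y_map p b \<noteq> inv (fst p) 1"
    and Y_eq: "\<And>b. b \<noteq> inv (fst p) 1 \<Longrightarrow> Y_map q b = Y_map p b"
  shows "P_inv q = P_inv p"
proof -
  have "orbit_of (Y_map q) x = orbit_of (Y_map p) x" if "x \<in> UNIV - {inv (fst p) 1}" for x
    by (rule orbit_of_cong[OF _ _ that]) (use Y_X Y_eq in auto)
  then show ?thesis
    unfolding P_inv_def \<open>fst q = fst p\<close> by (metis (no_types, lifting) image_cong)
qed

text \<open>On bottom positions, a Rauzy move of type 0 reinserts the letter at position \<open>n\<close> right
  after position \<open>m\<close> of the last top letter, and a left Rauzy move of type 0 reinserts the letter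
  at position \<open>1\<close> right before position \<open>k\<close> of the first top letter.\<close>

definition rauzy_shift :: "nat \<Rightarrow> nat \<Rightarrow> nat \<Rightarrow> nat" where
  "rauzy_shift n m j = (if j \<le> m then j else if j < n then j + 1 else m + 1)"

definition rauzy_unshift :: "nat \<Rightarrow> nat \<Rightarrow> nat \<Rightarrow> nat" where
  "rauzy_unshift n m i = (if i \<le> m then i else if i = m + 1 then n else i - 1)"

definition left_rauzy_shift :: "nat \<Rightarrow> nat \<Rightarrow> nat" where
  "left_rauzy_shift k j = (if j = 1 then k - 1 else if 1 < j \<and> j < k then j - 1 else j)"

definition left_rauzy_unshift :: "nat \<Rightarrow> nat \<Rightarrow> nat" where
  "left_rauzy_unshift k i = (if i \<le> k - 2 then i + 1 else if i = k - 1 then 1 else i)"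

lemma rauzy_shift_unshift:
  assumes "1 \<le> m" "m < n" "1 \<le> j" "j \<le> n"
  shows "1 \<le> rauzy_shift n m j \<and> rauzy_shift n m j \<le> n \<and> rauzy_unshift n m (rauzy_shift n m j) = j"
    and "1 \<le> rauzy_unshift n m j \<and> rauzy_unshift n m j \<le> n \<and> rauzy_shift n m (rauzy_unshift n m j) = j"
  using assms by (auto simp: rauzy_shift_def rauzy_unshift_def)

lemma left_rauzy_shift_unshift:
  assumes "2 \<le> k" "k \<le> n" "1 \<le> j" "j \<le> n"
  shows "1 \<le> left_rauzy_shift k j \<and> left_rauzy_shift k j \<le> n
      \<and> left_rauzy_unshift k (left_rauzy_shift k j) = j"
    and "1 \<le> left_rauzy_unshift k j \<and> left_rauzy_unshift k j \<le> n
      \<and> left_rauzy_shift k (left_rauzy_unshift k j) = j"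
  using assms by (auto simp: left_rauzy_shift_def left_rauzy_unshift_def)

lemma rauzy_move_0_Pair:
  fixes p0 p1 :: "'a::finite \<Rightarrow> nat"
  shows "rauzy_move 0 (p0, p1) = (p0, rauzy_shift CARD('a) (p1 (inv p0 CARD('a))) \<circ> p1)"
  by (simp add: rauzy_move_def Let_def comp_def mk_pair_def o_def rauzy_shift_def)

lemma left_rauzy_move_0_Pair:
  fixes p0 p1 :: "'a::finite \<Rightarrow> nat"
  shows "left_rauzy_move 0 (p0, p1) = (p0, left_rauzy_shift (p1 (inv p0 1)) \<circ> p1)"
  unfolding left_rauzy_move_def Let_def comp_def mk_pair_def left_rauzy_shift_def
  by (simp add: fun_eq_iff)

lemma rauzy_move_1: "rauzy_move 1 p = prod.swap (rauzy_move 0 (prod.swap p))"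
  by (simp add: rauzy_move_def Let_def comp_def mk_pair_def prod.swap_def)

lemma left_rauzy_move_1: "left_rauzy_move 1 p = prod.swap (left_rauzy_move 0 (prod.swap p))"
  by (simp add: left_rauzy_move_def Let_def comp_def mk_pair_def prod.swap_def)

section \<open>Pairs whose rows begin and end with different letters\<close>

locale nondegenerate_pair =
  fixes p0 p1 :: "'a::finite \<Rightarrow> nat"
  assumes bij0: "bij_betw p0 UNIV {1..CARD('a)}"
    and bij1: "bij_betw p1 UNIV {1..CARD('a)}"
    and first_letters_differ: "inv p0 1 \<noteq> inv p1 1"
    and last_letters_differ: "inv p0 CARD('a) \<noteq> inv p1 CARD('a)"
begin

lemmas rank0 [simp] = rank_ge_1[OF bij0] rank_le_card[OF bij0] inv_rank[OF bij0] rank_inv[OF bij0]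
lemmas rank1 [simp] = rank_ge_1[OF bij1] rank_le_card[OF bij1] inv_rank[OF bij1] rank_inv[OF bij1]

lemma ranks_nonzero [simp]: "p0 x \<noteq> 0" "p1 x \<noteq> 0"
  using rank0(1) rank1(1) by (metis not_one_le_zero)+

lemma card_ge_1 [simp]: "1 \<le> CARD('a)"
  using rank0(1,2) by (rule order_trans)

lemma nondegenerate_pair_swap: "nondegenerate_pair p1 p0"
  using bij0 bij1 first_letters_differ last_letters_differ by unfold_locales auto

lemma rank0_less_card_iff: "p0 x < CARD('a) \<longleftrightarrow> x \<noteq> inv p0 CARD('a)"
  using rank_eq_iff[OF bij0, of "CARD('a)" x] by (simp add: less_le)

lemma last_bottom_not_last_top: "p0 (inv p1 CARD('a)) < CARD('a)"
  using last_letters_differ by (simp add: rank0_less_card_iff)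

lemma S_map_swap_inverse: "S_map (p1, p0) (S_map (p0, p1) a) = a"
proof -
  consider (first) "p1 a = 1" | (after_last) "p1 a = p1 (inv p0 CARD('a)) + 1"
    | (other) "p1 a \<noteq> 1" "p1 a \<noteq> p1 (inv p0 CARD('a)) + 1"
    by blast
  then show ?thesis
  proof cases
    case first
    then show ?thesis using rank1(3)[of a] by (simp add: S_map_Pair)
  next
    case after_last
    then show ?thesis
      using last_bottom_not_last_top rank1(3)[of a] by (simp add: S_map_Pair)
  next
    case other
    define d where "d = inv p1 (p1 a - 1)"
    have "p1 d = p1 a - 1"
      unfolding d_def using other(1) rank1(1,2)[of a] by (intro rank1(4)) linarith+
    then have "p1 d \<noteq> p1 (inv p0 CARD('a))" "p1 d \<noteq> CARD('a)"
      using other rank1(1,2)[of a] by linarith+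
    then have "p0 d < CARD('a)" "p0 d \<noteq> p0 (inv p1 CARD('a))"
      by (auto simp: rank0_less_card_iff dest: arg_cong[where f = "inv p0"])
    then have "S_map (p1, p0) (inv p0 (p0 d + 1)) = inv p1 (p1 d + 1)"
      by (simp add: S_map_Pair)
    moreover have "S_map (p0, p1) a = inv p0 (p0 d + 1)"
      using other by (simp add: S_map_Pair d_def)
    moreover have "p1 d + 1 = p1 a"
      using \<open>p1 d = p1 a - 1\<close> other(1) rank1(1)[of a] by linarith
    ultimately show ?thesis by simp
  qed
qed

lemma S_map_first_bottom: "S_map (p0, p1) (inv p1 1) = inv p0 1"
  by (simp add: S_map_Pair)

lemma inj_S_map: "inj (S_map (p0, p1))"
  by (metis injI S_map_swap_inverse)

lemma S_map_eq_top_successor: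
  "S_map (p0, p1) a = (if p1 a = 1 then inv p0 1 else top_successor p0 p1 (inv p1 (p1 a - 1)))"
proof (cases "p1 a = 1")
  case False
  have "1 \<le> p1 a - 1" "p1 a - 1 \<le> CARD('a)"
    using False rank1(1,2)[of a] by linarith+
  then have "inv p1 (p1 a - 1) = inv p0 CARD('a) \<longleftrightarrow> p1 a - 1 = p1 (inv p0 CARD('a))"
    using rank_eq_iff[OF bij1] by metis
  also have "\<dots> \<longleftrightarrow> p1 a = p1 (inv p0 CARD('a)) + 1"
    using False rank1(1)[of a] by linarith
  finally show ?thesis
    using False by (simp add: S_map_Pair top_successor_def)
qed (simp add: S_map_Pair)

lemma Y_map_conv_S_map: "Y_map (p0, p1) b = S_map (p0, p1) (if b = inv p1 1 then inv p0 1 else b)"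
proof -
  have "p1 b = 1 \<longleftrightarrow> b = inv p1 1"
    using rank_eq_iff[OF bij1] by simp
  then show ?thesis
    by (simp add: Y_map_def S_map_first_bottom)
qed

lemma Y_map_closed:
  assumes "b \<noteq> inv p0 1"
  shows "Y_map (p0, p1) b \<noteq> inv p0 1"
proof
  assume "Y_map (p0, p1) b = inv p0 1"
  then have "S_map (p0, p1) (if b = inv p1 1 then inv p0 1 else b) = S_map (p0, p1) (inv p1 1)"
    by (simp add: Y_map_conv_S_map S_map_first_bottom)
  then have "(if b = inv p1 1 then inv p0 1 else b) = inv p1 1"
    by (rule inj_S_map[THEN injD])
  then show False
    using first_letters_differ by (simp split: if_splits)
qed

lemma inj_on_Y_map: "inj_on (Y_map (p0, p1)) (UNIV - {inv p0 1})"
proof (rule inj_onI)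
  fix x y
  assume "x \<in> UNIV - {inv p0 1}" "y \<in> UNIV - {inv p0 1}" "Y_map (p0, p1) x = Y_map (p0, p1) y"
  moreover from this(3) have
    "(if x = inv p1 1 then inv p0 1 else x) = (if y = inv p1 1 then inv p0 1 else y)"
    unfolding Y_map_conv_S_map by (rule inj_S_map[THEN injD])
  ultimately show "x = y"
    by (auto split: if_splits)
qed

lemma Y_map_swap_conj:
  assumes "x \<noteq> inv p0 1"
  shows "Y_map (p1, p0) (S_map (p1, p0) (Y_map (p0, p1) x)) = S_map (p1, p0) x"
proof -
  interpret swapped: nondegenerate_pair p1 p0 by (rule nondegenerate_pair_swap)
  have "S_map (p1, p0) (Y_map (p0, p1) x) = (if x = inv p1 1 then inv p0 1 else x)"
    by (simp add: Y_map_conv_S_map S_map_swap_inverse)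
  then show ?thesis
    using assms swapped.S_map_first_bottom by (simp add: swapped.Y_map_conv_S_map)
qed

lemma P_inv_swap: "P_inv (p1, p0) = P_inv (p0, p1)"
proof -
  interpret swapped: nondegenerate_pair p1 p0 by (rule nondegenerate_pair_swap)
  define h where "h = S_map (p1, p0)"
  define X where "X = UNIV - {inv p0 1}"
  have h_S: "h (S_map (p0, p1) a) = a" and S_h: "S_map (p0, p1) (h a) = a" for a
    using S_map_swap_inverse swapped.S_map_swap_inverse by (simp_all add: h_def)
  then have "inj h" "surj h" by (metis injI, metis surjI)
  moreover have "h (inv p0 1) = inv p1 1"
    using h_S[of "inv p1 1"] by (simp add: S_map_first_bottom)
  ultimately have h_X: "h ` X = UNIV - {inv p1 1}"
    by (simp add: X_def image_set_diff)
  define k where "k y = S_map (p0, p1) (Y_map (p1, p0) (h y))" for y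
  have Y_swap_h: "Y_map (p1, p0) (h y) = h (k y)" for y
    by (simp add: k_def h_S)
  have k_Y: "k (Y_map (p0, p1) x) = x" if "x \<in> X" for x
    using Y_map_swap_conj[of x] that S_h by (simp add: k_def h_def X_def)
  have "orbit_of (Y_map (p1, p0)) (h x) = h ` orbit_of (Y_map (p0, p1)) x" if "x \<in> X" for x
  proof -
    have "orbit_of k x = orbit_of (Y_map (p0, p1)) x"
      by (rule orbit_of_left_inverse[where f = "Y_map (p0, p1)", OF _ _ _ k_Y that])
        (use Y_map_closed inj_on_Y_map in \<open>simp_all add: X_def\<close>)
    then show ?thesis
      using orbit_of_conj[of "Y_map (p1, p0)" h k, OF Y_swap_h] by simp
  qed
  then have "orbit_of (Y_map (p1, p0)) ` h ` X = image h ` orbit_of (Y_map (p0, p1)) ` X"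
    unfolding image_image by (rule image_cong[OF refl])
  then show ?thesis
    unfolding P_inv_def fst_conv X_def[symmetric] h_X[symmetric]
    using image_mset_card_image_image[OF \<open>inj h\<close>, of "orbit_of (Y_map (p0, p1)) ` X"]
    by simp
qed

lemma last_top_not_last_bottom: "p1 (inv p0 CARD('a)) < CARD('a)"
  using nondegenerate_pair.last_bottom_not_last_top[OF nondegenerate_pair_swap] .

lemma first_top_not_first_bottom: "2 \<le> p1 (inv p0 1)"
proof -
  have "p1 (inv p0 1) \<noteq> 1"
    using first_letters_differ rank_eq_iff[OF bij1, of 1 "inv p0 1"] by simp
  then show ?thesis
    using rank1(1)[of "inv p0 1"] by linarith
qed

lemma nondegenerate_relabel_bottom:
  assumes \<sigma>: "\<And>j. 1 \<le> j \<Longrightarrow> j \<le> CARD('a) \<Longrightarrow> 1 \<le> \<sigma> j \<and> \<sigma> j \<le> CARD('a) \<and> \<tau> (\<sigma> j) = j"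
    and \<tau>: "\<And>i. 1 \<le> i \<Longrightarrow> i \<le> CARD('a) \<Longrightarrow> 1 \<le> \<tau> i \<and> \<tau> i \<le> CARD('a) \<and> \<sigma> (\<tau> i) = i"
    and first: "\<tau> 1 \<noteq> p1 (inv p0 1)" and last: "\<tau> CARD('a) \<noteq> p1 (inv p0 CARD('a))"
  shows "nondegenerate_pair p0 (\<sigma> \<circ> p1)"
proof
  note inv_relabel = inv_rank_relabel[OF bij1 \<sigma> \<tau>]
  show "bij_betw p0 UNIV {1..CARD('a)}" by (rule bij0)
  show "bij_betw (\<sigma> \<circ> p1) UNIV {1..CARD('a)}" by (rule bij_rank_relabel[OF bij1 \<sigma> \<tau>])
  show "inv p0 1 \<noteq> inv (\<sigma> \<circ> p1) 1"
    using first inv_relabel[of 1] \<tau>[of 1] by (auto simp: rank_eq_iff[OF bij1])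
  show "inv p0 CARD('a) \<noteq> inv (\<sigma> \<circ> p1) CARD('a)"
    using last inv_relabel[of "CARD('a)"] \<tau>[of "CARD('a)"] by (auto simp: rank_eq_iff[OF bij1])
qed

lemma rauzy_move_0_nondegenerate:
  "nondegenerate_pair p0 (rauzy_shift CARD('a) (p1 (inv p0 CARD('a))) \<circ> p1)"
  using last_top_not_last_bottom first_top_not_first_bottom
  by (intro nondegenerate_relabel_bottom[where \<tau> = "rauzy_unshift CARD('a) (p1 (inv p0 CARD('a)))"]
      rauzy_shift_unshift) (auto simp: rauzy_unshift_def)

lemma S_map_rauzy_move_0: "S_map (rauzy_move 0 (p0, p1)) = S_map (p0, p1)"
proof
  fix a
  define n where "n = CARD('a)"
  define m where "m = p1 (inv p0 n)"
  define \<sigma> where "\<sigma> = rauzy_shift n m"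
  define \<tau> where "\<tau> = rauzy_unshift n m"
  have m: "1 \<le> m" "m < n"
    using last_top_not_last_bottom by (simp_all add: m_def n_def)
  note shift = rauzy_shift_unshift[OF m, folded \<sigma>_def \<tau>_def]
  note inv_relabel = inv_rank_relabel[OF bij1 shift[unfolded n_def], folded n_def]
  define j where "j = p1 a"
  have j: "1 \<le> j" "j \<le> n" by (simp_all add: j_def n_def)
  have "\<sigma> j \<noteq> 1 \<Longrightarrow> 1 \<le> \<sigma> j - 1 \<and> \<sigma> j - 1 \<le> n"
    using j m by (auto simp: \<sigma>_def rauzy_shift_def)
  then have "S_map (p0, \<sigma> \<circ> p1) a = (if \<sigma> j = 1 then inv p0 1
     else if \<sigma> j = m + 1 then inv p0 (p0 (inv p1 (\<tau> n)) + 1)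
     else inv p0 (p0 (inv p1 (\<tau> (\<sigma> j - 1))) + 1))"
    using inv_relabel[of n] inv_relabel[of "\<sigma> j - 1"] m
    by (auto simp: S_map_Pair j_def m_def[symmetric] n_def[symmetric] \<sigma>_def rauzy_shift_def[of n m m])
  moreover have "S_map (p0, p1) a = (if j = 1 then inv p0 1
     else if j = m + 1 then inv p0 (p0 (inv p1 n) + 1)
     else inv p0 (p0 (inv p1 (j - 1)) + 1))"
    by (simp add: S_map_Pair j_def m_def[symmetric] n_def[symmetric])
  ultimately show "S_map (rauzy_move 0 (p0, p1)) a = S_map (p0, p1) a"
    using j m by (auto simp: rauzy_move_0_Pair \<sigma>_def \<tau>_def rauzy_shift_def rauzy_unshift_def
        m_def[symmetric] n_def[symmetric])
qed

lemma Y_map_rauzy_move_0: "Y_map (rauzy_move 0 (p0, p1)) = Y_map (p0, p1)"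
proof -
  define m where "m = p1 (inv p0 CARD('a))"
  have "1 \<le> m" by (simp add: m_def)
  then have "rauzy_shift CARD('a) m (p1 b) = 1 \<longleftrightarrow> p1 b = 1" for b
    by (auto simp: rauzy_shift_def)
  then show ?thesis
    using S_map_rauzy_move_0 unfolding rauzy_move_0_Pair m_def[symmetric]
    by (simp add: Y_map_def fun_eq_iff)
qed

lemma left_rauzy_move_0_nondegenerate: "nondegenerate_pair p0 (left_rauzy_shift (p1 (inv p0 1)) \<circ> p1)"
proof -
  define k where "k = p1 (inv p0 1)"
  have k: "2 \<le> k" "k \<le> CARD('a)"
    using first_top_not_first_bottom by (simp_all add: k_def)
  then have "left_rauzy_unshift k 1 \<noteq> k" "left_rauzy_unshift k CARD('a) = CARD('a)"
    by (auto simp: left_rauzy_unshift_def)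
  with k last_top_not_last_bottom show ?thesis
    unfolding k_def[symmetric]
    by (intro nondegenerate_relabel_bottom[where \<tau> = "left_rauzy_unshift k"] left_rauzy_shift_unshift)
      (simp_all add: k_def)
qed

lemma Y_map_left_rauzy_move_0:
  assumes "b \<noteq> inv p0 1"
  shows "Y_map (left_rauzy_move 0 (p0, p1)) b = Y_map (p0, p1) b"
proof -
  define n where "n = CARD('a)"
  define k where "k = p1 (inv p0 1)"
  define \<sigma> where "\<sigma> = left_rauzy_shift k"
  define \<tau> where "\<tau> = left_rauzy_unshift k"
  have k: "2 \<le> k" "k \<le> n"
    using first_top_not_first_bottom by (simp_all add: k_def n_def)
  note shift = left_rauzy_shift_unshift[OF k, folded \<sigma>_def \<tau>_def]
  note inv_relabel = inv_rank_relabel[OF bij1 shift[unfolded n_def], folded n_def]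
  interpret moved: nondegenerate_pair p0 "\<sigma> \<circ> p1"
    unfolding \<sigma>_def k_def by (rule left_rauzy_move_0_nondegenerate)
  have S_moved: "S_map (p0, \<sigma> \<circ> p1) a = (if \<sigma> (p1 a) = 1 then inv p0 1
      else top_successor p0 p1 (inv p1 (\<tau> (\<sigma> (p1 a) - 1))))" for a
  proof -
    have "\<sigma> (p1 a) \<noteq> 1 \<Longrightarrow> 1 \<le> \<sigma> (p1 a) - 1 \<and> \<sigma> (p1 a) - 1 \<le> n"
      using shift(1)[of "p1 a"] by (auto simp: n_def)
    moreover have "\<tau> n = n"
      using k by (auto simp: \<tau>_def left_rauzy_unshift_def)
    then have "top_successor p0 (\<sigma> \<circ> p1) = top_successor p0 p1"
      using inv_relabel[of n] k by (simp add: top_successor_def fun_eq_iff n_def)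
    ultimately show ?thesis
      using moved.S_map_eq_top_successor[of a] inv_relabel[of "\<sigma> (p1 a) - 1"] by auto
  qed
  define j where "j = p1 b"
  have "j \<noteq> k"
    using assms by (auto simp: j_def k_def dest: arg_cong[where f = "inv p1"])
  moreover have "1 \<le> j" "j \<le> n"
    by (simp_all add: j_def n_def)
  ultimately consider "j = 1" "k \<noteq> 2" | "j = 2" "k \<noteq> 2" | "3 \<le> j" "j < k" | "k < j" | "k = 2"
    by linarith
  then have "Y_map (p0, \<sigma> \<circ> p1) b = Y_map (p0, p1) b"
  proof cases
    case 1
    then have "\<sigma> j = k - 1" "k - 1 \<noteq> 1" "\<tau> (k - 2) = k - 1"
      using k by (simp_all add: \<sigma>_def \<tau>_def left_rauzy_shift_def left_rauzy_unshift_def)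
    with 1 k show ?thesis
      by (simp add: Y_map_def S_moved S_map_eq_top_successor j_def[symmetric] k_def[symmetric])
  next
    case 2
    then have "\<sigma> j = 1" "j \<noteq> 1" "j - 1 = 1" "\<sigma> k = k" "k \<noteq> 1" "\<tau> (k - 1) = 1"
      using k by (simp_all add: \<sigma>_def \<tau>_def left_rauzy_shift_def left_rauzy_unshift_def)
    then show ?thesis
      by (simp add: Y_map_def S_moved S_map_eq_top_successor j_def[symmetric] k_def[symmetric])
  next
    case 3
    then have "\<sigma> j = j - 1" "j \<noteq> 1" "j - 1 \<noteq> 1" "j - 1 - 1 = j - 2" "\<tau> (j - 2) = j - 1"
      using k by (auto simp: \<sigma>_def \<tau>_def left_rauzy_shift_def left_rauzy_unshift_def One_nat_def)
    with 3 show ?thesis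
      by (simp add: Y_map_def S_moved S_map_eq_top_successor j_def[symmetric])
  next
    case 4
    then have "\<sigma> j = j" "j \<noteq> 1" "\<tau> (j - 1) = j - 1"
      using k by (auto simp: \<sigma>_def \<tau>_def left_rauzy_shift_def left_rauzy_unshift_def)
    with 4 k show ?thesis
      by (simp add: Y_map_def S_moved S_map_eq_top_successor j_def[symmetric])
  next
    case 5
    then have "\<sigma> \<circ> p1 = p1"
      by (auto simp: \<sigma>_def left_rauzy_shift_def fun_eq_iff)
    then show ?thesis by simp
  qed
  then show ?thesis
    by (simp add: left_rauzy_move_0_Pair \<sigma>_def k_def)
qed

lemma type_0_move_invariants:
  assumes "r = rauzy_move 0 (p0, p1) \<or> r = left_rauzy_move 0 (p0, p1)"
  shows "nondegenerate_pair (fst r) (snd r) \<and> P_inv r = P_inv (p0, p1)"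
proof -
  have "fst r = p0"
    using assms by (auto simp: rauzy_move_0_Pair left_rauzy_move_0_Pair)
  moreover have "nondegenerate_pair (fst r) (snd r)"
    using assms rauzy_move_0_nondegenerate left_rauzy_move_0_nondegenerate
    by (auto simp: rauzy_move_0_Pair left_rauzy_move_0_Pair)
  moreover have "Y_map r b = Y_map (p0, p1) b" if "b \<noteq> inv p0 1" for b
    using assms Y_map_rauzy_move_0 Y_map_left_rauzy_move_0[OF that] by auto
  ultimately show ?thesis
    using P_inv_eqI[of r "(p0, p1)"] Y_map_closed by simp
qed

lemma rauzy_step_invariants:
  assumes "rauzy_step (p0, p1) r"
  shows "nondegenerate_pair (fst r) (snd r) \<and> P_inv r = P_inv (p0, p1)"
proof -
  consider "r = rauzy_move 0 (p0, p1) \<or> r = left_rauzy_move 0 (p0, p1)"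
    | "prod.swap r = rauzy_move 0 (p1, p0) \<or> prod.swap r = left_rauzy_move 0 (p1, p0)"
    using assms by (auto simp: rauzy_step_def rauzy_move_1 left_rauzy_move_1)
  then show ?thesis
  proof cases
    case 1
    then show ?thesis by (rule type_0_move_invariants)
  next
    case 2
    interpret swapped: nondegenerate_pair p1 p0 by (rule nondegenerate_pair_swap)
    obtain r0 r1 where r: "r = (r0, r1)" by fastforce
    have "nondegenerate_pair r1 r0 \<and> P_inv (r1, r0) = P_inv (p1, p0)"
      using swapped.type_0_move_invariants[of "(r1, r0)"] 2 by (simp add: r)
    then show ?thesis
      using nondegenerate_pair.nondegenerate_pair_swap nondegenerate_pair.P_inv_swap[of r1 r0]
        P_inv_swap
      by (auto simp: r)
  qed
qed

end

lemma irreducible_imp_nondegenerate_pair: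
  fixes p :: "('a::finite) rpair"
  assumes "is_pair p" and "irreducible p" and "2 \<le> CARD('a)"
  shows "nondegenerate_pair (fst p) (snd p)"
proof
  show bij0: "bij_betw (fst p) UNIV {1..CARD('a)}" and bij1: "bij_betw (snd p) UNIV {1..CARD('a)}"
    using \<open>is_pair p\<close> by (simp_all add: is_pair_def)
  have irr: "fst p -` {1..k} \<noteq> snd p -` {1..k}" if "1 \<le> k" "k < CARD('a)" for k
    using \<open>irreducible p\<close> that by (simp add: irreducible_def)
  have "fst p -` {1..1} \<noteq> snd p -` {1..1}"
    using irr[of 1] \<open>2 \<le> CARD('a)\<close> by simp
  then show "inv (fst p) 1 \<noteq> inv (snd p) 1"
    unfolding rank_vimage_1[OF bij0] rank_vimage_1[OF bij1] by simp
  have "fst p -` {1..CARD('a) - 1} \<noteq> snd p -` {1..CARD('a) - 1}"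
    using irr[of "CARD('a) - 1"] \<open>2 \<le> CARD('a)\<close> by simp
  then show "inv (fst p) CARD('a) \<noteq> inv (snd p) CARD('a)"
    unfolding rank_vimage_below_card[OF bij0] rank_vimage_below_card[OF bij1] by auto
qed

theorem proposition2p14:
  fixes p q :: "('a::finite) rpair"
  assumes "is_pair p" and "irreducible p"
    and "q \<in> labeled_extended_rauzy_class p"
  shows "P_inv q = P_inv p"
proof (cases "CARD('a) = 1")
  case True
  then obtain y :: 'a where "UNIV = {y}"
    by (rule card_1_singletonE)
  then have singleton: "UNIV - {x} = ({} :: 'a set)" for x
    by (metis (full_types) Diff_cancel UNIV_I singletonD)
  show ?thesis
    unfolding P_inv_def singleton by simp
next
  case False
  then have "2 \<le> CARD('a)"
    using zero_less_card_finite[where 'a = 'a] by linarith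
  have "rauzy_step\<^sup>*\<^sup>* p q"
    using assms(3) by (simp add: labeled_extended_rauzy_class_def)
  then have "nondegenerate_pair (fst q) (snd q) \<and> P_inv q = P_inv p"
  proof (induction rule: rtranclp_induct)
    case base
    show ?case using irreducible_imp_nondegenerate_pair[OF assms(1,2) \<open>2 \<le> CARD('a)\<close>] by simp
  next
    case (step r s)
    then show ?case
      using nondegenerate_pair.rauzy_step_invariants[of "fst r" "snd r" s] by simp
  qed
  then show ?thesis ..
qed

end
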